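(* Let $t$ be an indeterminate and let $\rho''_S: VSB_2\to GL_2(\mathbb{Z}[t^{\pm1}])$ be a representation extending the standard representation of $B_2$, i.e. $\rho''_S(\sigma_1)=\begin{pmatrix}0&t\\1&0\end{pmatrix}$. Then $\rho''_S(\tau_1)=\begin{pmatrix}a&ct\\c&a\end{pmatrix}$ for some $a,c\in\mathbb{Z}[t^{\pm1}]$, and $\rho''_S(\nu_1)$ is one of the following: (1) $\begin{pmatrix}p&q\\ \frac{1-p^2}{q}&-p\end{pmatrix}$ with $p,q\in\mathbb{Z}[t^{\pm1}]$; (2) $\begin{pmatrix}-1&0\\ r&1\end{pmatrix}$ with $r\in\mathbb{Z}[t^{\pm1}]$; (3) $\begin{pmatrix}1&0\\ r&-1\end{pmatrix}$ with $r\in\mathbb{Z}[t^{\pm1}]$; (4) $\begin{pmatrix}-1&0\\ 0&-1\end{pmatrix}$; (5) $\begin{pmatrix}1&0\\ 0&1\end{pmatrix}$.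
   Context: The virtual singular braid group $VSB_2$ is the group generated by $\sigma_1,\tau_1,\nu_1$ subject to the relations $\sigma_1\tau_1=\tau_1\sigma_1$ and $\nu_1^2=1$. It contains the braid group $B_2=\langle\sigma_1\rangle$ and the singular braid group $SB_2=\langle\sigma_1,\tau_1\mid \sigma_1\tau_1=\tau_1\sigma_1\rangle$. The standard representation of $B_2$ sends $\sigma_1$ to $\begin{pmatrix}0&t\\1&0\end{pmatrix}$. In case (1), $q$ is nonzero and the entry $\frac{1-p^2}{q}$ lies in $\mathbb{Z}[t^{\pm1}]$. *)

theory Defs
  imports "HOL-Analysis.Analysis" "HOL-Computational_Algebra.Formal_Laurent_Series"
begin

text \<open>The ring Z[t, t^-1] of integer Laurent polynomials, realised as the subring of
  formal Laurent series over int having only finitely many nonzero coefficients;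
  the indeterminate t is fls_X.\<close>
definition laurent_polys :: "int fls set" where
  "laurent_polys = {f. finite {n. fls_nth f n \<noteq> 0}}"

abbreviation tt :: "int fls" where "tt \<equiv> fls_X"

definition mat2 :: "'a::zero \<Rightarrow> 'a \<Rightarrow> 'a \<Rightarrow> 'a \<Rightarrow> 'a^2^2" where
  "mat2 a b c d = vector [vector [a, b], vector [c, d]]"

definition GL2_laurent :: "((int fls)^2^2) set" where
  "GL2_laurent = {M. (\<forall>i j. vec_nth (vec_nth M i) j \<in> laurent_polys) \<and>
      (\<exists>u\<in>laurent_polys. det M * u = 1)}"

end

theory Submission imports Defs begin

text \<open>An involution ((p, q), (r, s)) satisfies p^2 + q r = 1 = s^2 + q r and
  q (p + s) = 0 = r (p + s): if q is nonzero then s = -p and r q = 1 - p^2;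
  if q = 0 then p, s are square roots of 1, and r = 0 unless p = -s, because
  2 is not a zero divisor.\<close>

lemma mat2_nth [simp]:
  "mat2 a b c d $ 1 $ 1 = a" "mat2 a b c d $ 1 $ 2 = b"
  "mat2 a b c d $ 2 $ 1 = c" "mat2 a b c d $ 2 $ 2 = d"
  by (simp_all add: mat2_def vector_2)

lemma mat2_entries: "(M :: 'a::zero^2^2) = mat2 (M$1$1) (M$1$2) (M$2$1) (M$2$2)"
  by (simp add: vec_eq_iff forall_2)

lemma mat2_eq_iff:
  "mat2 a b c d = (mat2 a' b' c' d' :: 'a::zero^2^2) \<longleftrightarrow> a = a' \<and> b = b' \<and> c = c' \<and> d = d'"
  by (auto simp: vec_eq_iff forall_2)

lemma mat2_mult:
  "mat2 a b c d ** mat2 e f g h =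
    (mat2 (a*e + b*g) (a*f + b*h) (c*e + d*g) (c*f + d*h) :: 'a::semiring_1^2^2)"
  by (simp add: vec_eq_iff forall_2 matrix_matrix_mult_def sum_2)

lemma mat_one_eq_mat2: "(mat 1 :: 'a::semiring_1^2^2) = mat2 1 0 0 1"
  by (simp add: vec_eq_iff forall_2 mat_def)

lemma GL2_laurent_entry: "M \<in> GL2_laurent \<Longrightarrow> M $ i $ j \<in> laurent_polys"
  unfolding GL2_laurent_def by blast

lemma mat2_commute_antidiag:
  fixes x a b c d :: "'a::idom"
  assumes "x \<noteq> 0"
    and "mat2 0 x 1 0 ** mat2 a b c d = mat2 a b c d ** mat2 0 x 1 0"
  shows "b = c * x \<and> d = a"
proof -
  from assms(2) have "x * c = b" and "x * d = a * x"
    by (simp_all add: mat2_mult mat2_eq_iff)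
  with assms(1) show ?thesis
    by (simp add: mult.commute)
qed

lemma mat2_involution_cases:
  fixes p q r s :: "'a::{idom, semiring_char_0}"
  assumes "mat2 p q r s ** mat2 p q r s = mat 1"
  shows "(q \<noteq> 0 \<and> r * q = 1 - p^2 \<and> s = -p)
    \<or> (q = 0 \<and> p = -1 \<and> s = 1)
    \<or> (q = 0 \<and> p = 1 \<and> s = -1)
    \<or> (q = 0 \<and> r = 0 \<and> p = -1 \<and> s = -1)
    \<or> (q = 0 \<and> r = 0 \<and> p = 1 \<and> s = 1)"
proof -
  from assms have eqs: "p * p + q * r = 1" "p * q + q * s = 0" "r * p + s * r = 0" "r * q + s * s = 1"
    by (simp_all add: mat2_mult mat_one_eq_mat2 mat2_eq_iff)
  have q_trace: "q * (p + s) = 0" and r_trace: "r * (p + s) = 0"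
    using eqs(2,3) by (simp_all add: algebra_simps)
  show ?thesis
  proof (cases "q = 0")
    case False
    with q_trace have "s = -p" by (simp add: add_eq_0_iff)
    moreover have "r * q = 1 - p^2" using eqs(1) by (simp add: algebra_simps power2_eq_square)
    ultimately show ?thesis using False by blast
  next
    case True
    have p: "p = 1 \<or> p = -1" and s: "s = 1 \<or> s = -1"
      using eqs(1,4) True by (simp_all add: power2_eq_1_iff flip: power2_eq_square)
    have "r = 0" if "s = p"
      using r_trace that p by auto
    then show ?thesis using True p s by auto
  qed
qed

theorem theorem5p1:
  fixes S T N :: "(int fls)^2^2"
  assumes "S = mat2 0 tt 1 0"
    and "T \<in> GL2_laurent" and "N \<in> GL2_laurent"
    and "S ** T = T ** S"
    and "N ** N = mat 1"
  shows "(\<exists>a\<in>laurent_polys. \<exists>c\<in>laurent_polys. T = mat2 a (c * tt) c a) \<and>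
    ((\<exists>p\<in>laurent_polys. \<exists>q\<in>laurent_polys. \<exists>r\<in>laurent_polys.
        q \<noteq> 0 \<and> r * q = 1 - p ^ 2 \<and> N = mat2 p q r (- p))
     \<or> (\<exists>r\<in>laurent_polys. N = mat2 (-1) 0 r 1)
     \<or> (\<exists>r\<in>laurent_polys. N = mat2 1 0 r (-1))
     \<or> N = mat2 (-1) 0 0 (-1)
     \<or> N = mat2 1 0 0 1)"
proof -
  obtain a b c d where T: "T = mat2 a b c d" using mat2_entries by blast
  have "b = c * tt \<and> d = a"
    using mat2_commute_antidiag[of tt] assms(1,4) by (simp add: T)
  moreover have "a \<in> laurent_polys" "c \<in> laurent_polys"
    using GL2_laurent_entry[OF assms(2)] by (metis T mat2_nth)+
  ultimately have T_shape: "\<exists>a\<in>laurent_polys. \<exists>c\<in>laurent_polys. T = mat2 a (c * tt) c a"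
    using T by blast
  obtain p q r s where N: "N = mat2 p q r s" using mat2_entries by blast
  have "p \<in> laurent_polys" "q \<in> laurent_polys" "r \<in> laurent_polys"
    using GL2_laurent_entry[OF assms(3)] by (metis N mat2_nth)+
  with mat2_involution_cases[of p q r s] assms(5) T_shape show ?thesis
    unfolding N by blast
qed

end
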